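(* Let $\mathbf{g}\in H_{1,2,2}$ with $N(\mathbf{g})$ even. Then there exist $\mathbf{h},\mathbf{h}'\in H_{1,2,2}$ with $\mathbf{g} = (1+\mathbf{i})\mathbf{h}$ and $\mathbf{g} = \mathbf{h}'(1+\mathbf{i})$; i.e. $1+\mathbf{i}$ is both a left factor and a right factor of $\mathbf{g}$ in $H_{1,2,2}$.
   Context: Let $\mathbf{i},\mathbf{j},\mathbf{k}$ be the standard basis units of the real quaternions. For a quaternion $\mathbf{q}=q_1+q_2\mathbf{i}+q_3\mathbf{j}+q_4\mathbf{k}$, its conjugate is $\overline{\mathbf{q}}=q_1-q_2\mathbf{i}-q_3\mathbf{j}-q_4\mathbf{k}$ and its norm is $N(\mathbf{q})=\mathbf{q}\overline{\mathbf{q}}$. $H_{1,2,2}$ is the $\mathbb{Z}$-module generated by $\mathbf{v}_1=1$, $\mathbf{v}_2=\mathbf{i}$, $\mathbf{v}_3=\tfrac12(1+\mathbf{i}+\sqrt2\,\mathbf{j})$, $\mathbf{v}_4=\tfrac12(1+\mathbf{i}+\sqrt2\,\mathbf{k})$; it is a subring of the quaternions, closed under conjugation, with the norm taking nonnegative integer values on it. *)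

theory Defs
  imports Complex_Main
begin

datatype quat = Quat (qre: real) (qi: real) (qj: real) (qk: real)

definition qadd :: "quat \<Rightarrow> quat \<Rightarrow> quat" where
  "qadd p q = Quat (qre p + qre q) (qi p + qi q) (qj p + qj q) (qk p + qk q)"

definition qscale :: "real \<Rightarrow> quat \<Rightarrow> quat" where
  "qscale r q = Quat (r * qre q) (r * qi q) (r * qj q) (r * qk q)"

text \<open>Hamilton product (i^2 = j^2 = k^2 = ijk = -1).\<close>
definition qmult :: "quat \<Rightarrow> quat \<Rightarrow> quat" where
  "qmult p q = Quat
     (qre p * qre q - qi p * qi q - qj p * qj q - qk p * qk q)
     (qre p * qi q + qi p * qre q + qj p * qk q - qk p * qj q)
     (qre p * qj q - qi p * qk q + qj p * qre q + qk p * qi q)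
     (qre p * qk q + qi p * qj q - qj p * qi q + qk p * qre q)"

definition qconj :: "quat \<Rightarrow> quat" where
  "qconj q = Quat (qre q) (- qi q) (- qj q) (- qk q)"

text \<open>N(q) = q * conj q, which is a real quaternion; we take its real part.\<close>
definition qN :: "quat \<Rightarrow> real" where
  "qN q = qre (qmult q (qconj q))"

definition v1 :: quat where "v1 = Quat 1 0 0 0"
definition v2 :: quat where "v2 = Quat 0 1 0 0"
definition v3 :: quat where "v3 = Quat (1/2) (1/2) (sqrt 2 / 2) 0"
definition v4 :: quat where "v4 = Quat (1/2) (1/2) 0 (sqrt 2 / 2)"

definition H122 :: "quat set" where
  "H122 = {qadd (qadd (qscale (of_int a) v1) (qscale (of_int b) v2))
                (qadd (qscale (of_int c) v3) (qscale (of_int d) v4)) | a b c d :: int. True}"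

definition one_plus_i :: quat where "one_plus_i = Quat 1 1 0 0"

end

theory Submission
  imports Defs
begin

text \<open>Write g = a v1 + b v2 + c v3 + d v4. Its norm is the integral quadratic form
  a^2 + b^2 + (a+b)(c+d) + c^2 + cd + d^2, which is even exactly when c + d and a + b + c
  are both even. Multiplication by 1 + i on either side acts on the coordinates (a, b, c, d)
  by an explicit integral linear map, and these two parity conditions are precisely what is
  needed to solve for the coordinates of the cofactor in integers.\<close>

definition H122_elt :: "int \<Rightarrow> int \<Rightarrow> int \<Rightarrow> int \<Rightarrow> quat" where
  "H122_elt a b c d = qadd (qadd (qscale (of_int a) v1) (qscale (of_int b) v2))
                           (qadd (qscale (of_int c) v3) (qscale (of_int d) v4))"

lemma H122_iff: "g \<in> H122 \<longleftrightarrow> (\<exists>a b c d. g = H122_elt a b c d)"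
  unfolding H122_def H122_elt_def by blast

lemma H122_elt_in_H122 [simp]: "H122_elt a b c d \<in> H122"
  using H122_iff by blast

lemma H122_elt_coords:
  "H122_elt a b c d = Quat (a + (c + d) / 2) (b + (c + d) / 2) (c * sqrt 2 / 2) (d * sqrt 2 / 2)"
  unfolding H122_elt_def qadd_def qscale_def v1_def v2_def v3_def v4_def
  by (simp add: field_simps)

lemma qN_H122_elt:
  "qN (H122_elt a b c d) = of_int (a\<^sup>2 + b\<^sup>2 + (a + b) * (c + d) + c\<^sup>2 + c * d + d\<^sup>2)"
  unfolding H122_elt_coords qN_def qmult_def qconj_def
  by (simp add: field_simps power2_eq_square)

lemma even_H122_norm_form_iff:
  fixes a b c d :: int
  shows "even (a\<^sup>2 + b\<^sup>2 + (a + b) * (c + d) + c\<^sup>2 + c * d + d\<^sup>2)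
    \<longleftrightarrow> even (c + d) \<and> even (a + b + c)"
  by (auto simp: even_add even_mult_iff)

lemma one_plus_i_mult_H122_elt:
  "qmult one_plus_i (H122_elt x y z w) = H122_elt (x - y - z) (x + y + w) (z - w) (z + w)"
  unfolding H122_elt_coords one_plus_i_def qmult_def
  by (simp add: field_simps)

lemma H122_elt_mult_one_plus_i:
  "qmult (H122_elt x y z w) one_plus_i = H122_elt (x - y - w) (x + y + z) (z + w) (w - z)"
  unfolding H122_elt_coords one_plus_i_def qmult_def
  by (simp add: field_simps)

lemma one_plus_i_left_factor:
  assumes "even (c + d)" and "even (a + b + c)"
  shows "\<exists>h \<in> H122. H122_elt a b c d = qmult one_plus_i h"
proof -
  obtain p q where "c + d = 2 * p" and "a + b + c = 2 * q"
    using assms by (meson evenE)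
  then have b: "b = 2 * q - a - c" and d: "d = 2 * p - c"
    by linarith+
  have "qmult one_plus_i (H122_elt q (q - a - p) p (p - c)) = H122_elt a b c d"
    unfolding one_plus_i_mult_H122_elt b d by (simp add: algebra_simps)
  then show ?thesis
    using H122_elt_in_H122 by metis
qed

lemma one_plus_i_right_factor:
  assumes "even (c + d)" and "even (a + b + c)"
  shows "\<exists>h \<in> H122. H122_elt a b c d = qmult h one_plus_i"
proof -
  obtain p q where "c + d = 2 * p" and "a + b + c = 2 * q"
    using assms by (meson evenE)
  then have b: "b = 2 * q - a - c" and d: "d = 2 * p - c"
    by linarith+
  have "qmult (H122_elt (q - c + p) (q - a - c) (c - p) p) one_plus_i = H122_elt a b c d"
    unfolding H122_elt_mult_one_plus_i b d by (simp add: algebra_simps)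
  then show ?thesis
    using H122_elt_in_H122 by metis
qed

theorem theorem3:
  assumes "g \<in> H122"
    and "\<exists>k::int. qN g = of_int (2 * k)"
  shows "\<exists>h \<in> H122. \<exists>h' \<in> H122. g = qmult one_plus_i h \<and> g = qmult h' one_plus_i"
proof -
  obtain a b c d where g: "g = H122_elt a b c d"
    using assms(1) H122_iff by blast
  obtain k :: int where "qN g = of_int (2 * k)"
    using assms(2) by blast
  then have "even (a\<^sup>2 + b\<^sup>2 + (a + b) * (c + d) + c\<^sup>2 + c * d + d\<^sup>2)"
    unfolding g qN_H122_elt by (metis of_int_eq_iff dvd_triv_left)
  then have "even (c + d)" and "even (a + b + c)"
    using even_H122_norm_form_iff by blast+
  then show ?thesis
    unfolding g using one_plus_i_left_factor one_plus_i_right_factor by blast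
qed

end
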